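(* Let $G$ be a concurrent game structure, $T\subseteq S$, with all states of $T\cup W_2$ absorbing. Let $v$ be a valuation such that $\mathrm{Pre}_1(v)\ge v$ and $v(s)=0$ for all $s\in W_2$. Let $\xi_1$ be a player-1 selector with $\mathrm{Pre}_{1:\xi_1}(v)=\mathrm{Pre}_1(v)$. If $\xi_1$ is proper, then for all player-2 strategies $\pi_2$ we have $\Pr^{\overline{\xi}_1,\pi_2}(\mathrm{Reach}(T))\ge v$, i.e. $\Pr_s^{\overline{\xi}_1,\pi_2}(\mathrm{Reach}(T))\ge v(s)$ for all $s\in S$.
   Context: Concurrent game structure $G=(S,M,\Gamma_1,\Gamma_2,\delta)$: finite states, finite moves, nonempty move sets $\Gamma_i(s)$, transition probabilities $\delta(s,a_1,a_2)\in\mathrm{Distr}(S)$ (simultaneous independent moves). Absorbing state: every move pair leads back to it with probability 1. Selectors assign to each state a distribution on available moves; $\overline{\xi}$ is the memoryless strategy playing $\xi$. $\Pr_s^{\pi_1,\pi_2}$: induced measure on plays from $s$. $\mathrm{Reach}(X)$: plays visiting $X$. $W_2=\{s:\sup_{\pi_1}\inf_{\pi_2}\Pr_s^{\pi_1,\pi_2}(\mathrm{Reach}(T))=0\}$. A valuation is $v:S\to[0,1]$, compared pointwise. $\mathrm{Pre}_{\xi_1,\xi_2}(v)(s)=\sum_{a,b}\sum_tv(t)\delta(s,a,b)(t)\xi_1(s)(a)\xi_2(s)(b)$, $\mathrm{Pre}_{1:\xi_1}(v)(s)=\inf_{\xi_2}\mathrm{Pre}_{\xi_1,\xi_2}(v)(s)$,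 $\mathrm{Pre}_1(v)(s)=\sup_{\xi_1}\mathrm{Pre}_{1:\xi_1}(v)(s)$. A player-1 strategy $\pi_1$ is proper if for every player-2 strategy $\pi_2$ and all $s\in S\setminus(T\cup W_2)$, $\Pr_s^{\pi_1,\pi_2}(\mathrm{Reach}(T\cup W_2))=1$; a selector is proper if its memoryless strategy is. *)

theory Defs
  imports "HOL-Probability.Probability"
begin

text \<open>Histories (finite play prefixes) are nonempty lists of states; the current
  state is the last element.\<close>

definition game :: "('s::finite \<Rightarrow> 'm::finite set) \<Rightarrow> ('s \<Rightarrow> 'm set) \<Rightarrow> ('s \<Rightarrow> 'm \<Rightarrow> 'm \<Rightarrow> 's pmf) \<Rightarrow> bool" where
  "game Mv1 Mv2 delta \<longleftrightarrow> (\<forall>s. Mv1 s \<noteq> {} \<and> Mv2 s \<noteq> {})"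

definition absorbing :: "('s \<Rightarrow> 'm set) \<Rightarrow> ('s \<Rightarrow> 'm set) \<Rightarrow> ('s \<Rightarrow> 'm \<Rightarrow> 'm \<Rightarrow> 's pmf) \<Rightarrow> 's \<Rightarrow> bool" where
  "absorbing Mv1 Mv2 delta s \<longleftrightarrow>
     (\<forall>a\<in>Mv1 s. \<forall>b\<in>Mv2 s. delta s a b = return_pmf s)"

definition strategy :: "('s \<Rightarrow> 'm set) \<Rightarrow> ('s list \<Rightarrow> 'm pmf) \<Rightarrow> bool" where
  "strategy Mv st \<longleftrightarrow> (\<forall>h. h \<noteq> [] \<longrightarrow> set_pmf (st h) \<subseteq> Mv (last h))"

definition selector :: "('s \<Rightarrow> 'm set) \<Rightarrow> ('s \<Rightarrow> 'm pmf) \<Rightarrow> bool" where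
  "selector Mv xi \<longleftrightarrow> (\<forall>s. set_pmf (xi s) \<subseteq> Mv s)"

definition memoryless :: "('s \<Rightarrow> 'm pmf) \<Rightarrow> ('s list \<Rightarrow> 'm pmf)" where
  "memoryless xi = (\<lambda>h. xi (last h))"

definition step :: "('s \<Rightarrow> 'm \<Rightarrow> 'm \<Rightarrow> 's pmf) \<Rightarrow> ('s list \<Rightarrow> 'm pmf) \<Rightarrow> ('s list \<Rightarrow> 'm pmf)
    \<Rightarrow> 's list \<Rightarrow> 's pmf" where
  "step delta pi1 pi2 h =
     bind_pmf (pi1 h) (\<lambda>a. bind_pmf (pi2 h) (\<lambda>b. delta (last h) a b))"

text \<open>Probability, from history h, that the play visits X within n further steps
  (counting the current state).\<close>
fun reach_within :: "('s \<Rightarrow> 'm \<Rightarrow> 'm \<Rightarrow> 's pmf) \<Rightarrow> 's set \<Rightarrow> ('s list \<Rightarrow> 'm pmf)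
    \<Rightarrow> ('s list \<Rightarrow> 'm pmf) \<Rightarrow> nat \<Rightarrow> 's list \<Rightarrow> real" where
  "reach_within delta X pi1 pi2 0 h = (if last h \<in> X then 1 else 0)"
| "reach_within delta X pi1 pi2 (Suc n) h =
     (if last h \<in> X then 1
      else measure_pmf.expectation (step delta pi1 pi2 h)
             (\<lambda>t. reach_within delta X pi1 pi2 n (h @ [t])))"

text \<open>Pr_s^{pi1,pi2}(Reach X): by continuity of the measure from below, the limit
  (supremum) of the probabilities of reaching X within n steps.\<close>
definition reach_prob :: "('s \<Rightarrow> 'm \<Rightarrow> 'm \<Rightarrow> 's pmf) \<Rightarrow> 's set \<Rightarrow> ('s list \<Rightarrow> 'm pmf)
    \<Rightarrow> ('s list \<Rightarrow> 'm pmf) \<Rightarrow> 's \<Rightarrow> real" where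
  "reach_prob delta X pi1 pi2 s = (SUP n. reach_within delta X pi1 pi2 n [s])"

definition W2 :: "('s \<Rightarrow> 'm set) \<Rightarrow> ('s \<Rightarrow> 'm set) \<Rightarrow> ('s \<Rightarrow> 'm \<Rightarrow> 'm \<Rightarrow> 's pmf) \<Rightarrow> 's set \<Rightarrow> 's set" where
  "W2 Mv1 Mv2 delta T =
     {s. (SUP pi1 \<in> {st. strategy Mv1 st}. INF pi2 \<in> {st. strategy Mv2 st}.
            reach_prob delta T pi1 pi2 s) = 0}"

definition Pre_pair :: "('s \<Rightarrow> 'm \<Rightarrow> 'm \<Rightarrow> 's pmf) \<Rightarrow> ('s \<Rightarrow> 'm pmf) \<Rightarrow> ('s \<Rightarrow> 'm pmf)
    \<Rightarrow> ('s \<Rightarrow> real) \<Rightarrow> 's \<Rightarrow> real" where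
  "Pre_pair delta xi1 xi2 v s =
     measure_pmf.expectation (bind_pmf (xi1 s) (\<lambda>a. bind_pmf (xi2 s) (\<lambda>b. delta s a b))) v"

definition Pre1_sel :: "('s \<Rightarrow> 'm set) \<Rightarrow> ('s \<Rightarrow> 'm \<Rightarrow> 'm \<Rightarrow> 's pmf) \<Rightarrow> ('s \<Rightarrow> 'm pmf)
    \<Rightarrow> ('s \<Rightarrow> real) \<Rightarrow> 's \<Rightarrow> real" where
  "Pre1_sel Mv2 delta xi1 v s = (INF xi2 \<in> {xi. selector Mv2 xi}. Pre_pair delta xi1 xi2 v s)"

definition Pre1 :: "('s \<Rightarrow> 'm set) \<Rightarrow> ('s \<Rightarrow> 'm set) \<Rightarrow> ('s \<Rightarrow> 'm \<Rightarrow> 'm \<Rightarrow> 's pmf)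
    \<Rightarrow> ('s \<Rightarrow> real) \<Rightarrow> 's \<Rightarrow> real" where
  "Pre1 Mv1 Mv2 delta v s = (SUP xi1 \<in> {xi. selector Mv1 xi}. Pre1_sel Mv2 delta xi1 v s)"

definition proper_strategy :: "('s \<Rightarrow> 'm set) \<Rightarrow> ('s \<Rightarrow> 'm set) \<Rightarrow> ('s \<Rightarrow> 'm \<Rightarrow> 'm \<Rightarrow> 's pmf)
    \<Rightarrow> 's set \<Rightarrow> ('s list \<Rightarrow> 'm pmf) \<Rightarrow> bool" where
  "proper_strategy Mv1 Mv2 delta T pi1 \<longleftrightarrow>
     (\<forall>pi2. strategy Mv2 pi2 \<longrightarrow>
        (\<forall>s. s \<notin> T \<union> W2 Mv1 Mv2 delta T \<longrightarrow>
           reach_prob delta (T \<union> W2 Mv1 Mv2 delta T) pi1 pi2 s = 1))"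

definition proper_selector :: "('s \<Rightarrow> 'm set) \<Rightarrow> ('s \<Rightarrow> 'm set) \<Rightarrow> ('s \<Rightarrow> 'm \<Rightarrow> 'm \<Rightarrow> 's pmf)
    \<Rightarrow> 's set \<Rightarrow> ('s \<Rightarrow> 'm pmf) \<Rightarrow> bool" where
  "proper_selector Mv1 Mv2 delta T xi \<longleftrightarrow> proper_strategy Mv1 Mv2 delta T (memoryless xi)"

end

theory Submission
  imports Defs
begin

text \<open>Write \<open>W = W\<^sub>2\<close> and \<open>U = T \<union> W\<close>. Along any play of \<open>\<xi>\<^sub>1\<close> against \<open>\<pi>\<^sub>2\<close>, \<open>v\<close> is a
  submartingale until \<open>U\<close> is hit, since \<open>v \<le> Pre\<^sub>1(v) = Pre\<^sub>1\<^sub>:\<^sub>\<xi>\<^sub>1(v)\<close> and \<open>\<pi>\<^sub>2\<close> plays at the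
  current history like some selector. As \<open>v \<le> 1\<close> everywhere and \<open>v = 0\<close> on \<open>W\<close>, induction on
  the horizon \<open>n\<close> gives \<open>v(s) \<le> Pr(reach T within n) + 1 - Pr(reach U within n)\<close>.
  Properness makes the last term vanish as \<open>n \<rightarrow> \<infinity>\<close>.\<close>

lemma reach_within_bounds:
  "0 \<le> reach_within delta X pi1 pi2 n h \<and> reach_within delta X pi1 pi2 n h \<le> (1::real)"
proof (induction n arbitrary: h)
  case 0
  then show ?case by simp
next
  case (Suc n)
  let ?p = "step delta pi1 pi2 h"
  let ?f = "\<lambda>t. reach_within delta X pi1 pi2 n (h @ [t])"
  have "0 \<le> measure_pmf.expectation ?p ?f"
    by (rule Bochner_Integration.integral_nonneg) (use Suc in auto)
  moreover have "measure_pmf.expectation ?p ?f \<le> measure_pmf.expectation ?p (\<lambda>_. 1)"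
    by (rule Bochner_Integration.integral_mono_AE)
       (auto intro!: measure_pmf.integrable_const_bound[where B=1] simp: Suc)
  ultimately show ?case by simp
qed

lemma bdd_above_reach_within: "bdd_above (range (\<lambda>n. reach_within delta X pi1 pi2 n h))"
  by (rule bdd_aboveI[where M=1]) (auto simp: reach_within_bounds)

lemma reach_within_le_reach_prob:
  "reach_within delta X pi1 pi2 n [s] \<le> reach_prob delta X pi1 pi2 s"
  unfolding reach_prob_def by (rule cSUP_upper[OF _ bdd_above_reach_within]) simp

lemma reach_prob_start_in:
  assumes "s \<in> X"
  shows "reach_prob delta X pi1 pi2 s = 1"
proof -
  have "reach_within delta X pi1 pi2 n [s] = 1" for n
    using assms by (cases n) simp_all
  then show ?thesis by (simp add: reach_prob_def)
qed

lemma expectation_ge_Min: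
  fixes v :: "'s::finite \<Rightarrow> real"
  shows "Min (range v) \<le> measure_pmf.expectation p v"
  by (rule measure_pmf.integral_ge_const) (auto intro: integrable_measure_pmf_finite)

text \<open>Player 2's move distribution at \<open>h\<close> extends to a selector, so the infimum over selectors
  in \<open>Pre\<^sub>1\<^sub>:\<^sub>\<xi>\<^sub>1\<close> bounds the one-step expectation from below.\<close>

lemma Pre1_sel_le_expectation_step:
  fixes v :: "'s::finite \<Rightarrow> real"
  assumes "game Mv1 Mv2 delta" and "strategy Mv2 pi2" and "h \<noteq> []"
  shows "Pre1_sel Mv2 delta xi1 v (last h)
           \<le> measure_pmf.expectation (step delta (memoryless xi1) pi2 h) v"
proof -
  define xi2 where
    "xi2 = (\<lambda>s. if s = last h then pi2 h else return_pmf (SOME b. b \<in> Mv2 s))"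
  have "selector Mv2 xi2"
    unfolding selector_def
  proof
    fix s
    have "(SOME b. b \<in> Mv2 s) \<in> Mv2 s"
      using assms(1) by (simp add: game_def some_in_eq)
    then show "set_pmf (xi2 s) \<subseteq> Mv2 s"
      using assms(2,3) by (auto simp: xi2_def strategy_def)
  qed
  moreover have "bdd_below ((\<lambda>xi2. Pre_pair delta xi1 xi2 v (last h)) ` {xi. selector Mv2 xi})"
    by (rule bdd_belowI[where m="Min (range v)"]) (auto simp: Pre_pair_def expectation_ge_Min)
  ultimately have "Pre1_sel Mv2 delta xi1 v (last h) \<le> Pre_pair delta xi1 xi2 v (last h)"
    unfolding Pre1_sel_def by (intro cINF_lower) simp_all
  also have "\<dots> = measure_pmf.expectation (step delta (memoryless xi1) pi2 h) v"
    by (simp add: Pre_pair_def step_def memoryless_def xi2_def)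
  finally show ?thesis .
qed

lemma value_le_reach_within_defect:
  fixes v :: "'s::finite \<Rightarrow> real"
  assumes "T \<subseteq> U" and "\<forall>s. v s \<le> 1" and "\<forall>s \<in> U - T. v s = 0"
    and submart: "\<And>h. h \<noteq> [] \<Longrightarrow> last h \<notin> U \<Longrightarrow>
                   v (last h) \<le> measure_pmf.expectation (step delta pi1 pi2 h) v"
    and "h \<noteq> []"
  shows "v (last h) \<le> reach_within delta T pi1 pi2 n h + 1 - reach_within delta U pi1 pi2 n h"
  using \<open>h \<noteq> []\<close>
proof (induction n arbitrary: h)
  case 0
  then show ?case
    using assms(1-3) by auto
next
  case (Suc n)
  let ?R = "reach_within delta T pi1 pi2" and ?R' = "reach_within delta U pi1 pi2"
  show ?case
  proof (cases "last h \<in> U")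
    case True
    then show ?thesis
      using assms(1-3) reach_within_bounds[of delta T pi1 pi2 "Suc n" h] by auto
  next
    case False
    let ?p = "step delta pi1 pi2 h"
    have integ: "\<And>f :: 's \<Rightarrow> real. integrable (measure_pmf ?p) f"
      by (rule integrable_measure_pmf_finite) simp
    have "v (last h) \<le> measure_pmf.expectation ?p v"
      using submart Suc.prems False by blast
    also have "\<dots> \<le> measure_pmf.expectation ?p (\<lambda>t. ?R n (h @ [t]) + 1 - ?R' n (h @ [t]))"
      by (rule Bochner_Integration.integral_mono[OF integ integ]) (use Suc.IH[of "h @ [_]"] in simp)
    also have "\<dots> = ?R (Suc n) h + 1 - ?R' (Suc n) h"
      using False assms(1)
      by (auto simp: Bochner_Integration.integral_diff[OF integ integ]
                     Bochner_Integration.integral_add[OF integ integ])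
    finally show ?thesis .
  qed
qed

lemma le_reach_prob_of_defect_bound:
  assumes "\<And>n. x \<le> reach_within delta T pi1 pi2 n [s] + 1 - reach_within delta U pi1 pi2 n [s]"
    and "reach_prob delta U pi1 pi2 s = 1"
  shows "x \<le> reach_prob delta T pi1 pi2 s"
proof -
  have "reach_prob delta U pi1 pi2 s \<le> reach_prob delta T pi1 pi2 s + 1 - x"
    unfolding reach_prob_def[of _ U]
  proof (rule cSUP_least)
    fix n
    show "reach_within delta U pi1 pi2 n [s] \<le> reach_prob delta T pi1 pi2 s + 1 - x"
      using assms(1)[of n] reach_within_le_reach_prob[of delta T pi1 pi2 n s] by linarith
  qed simp
  then show ?thesis using assms(2) by simp
qed

theorem lemma3:
  fixes Mv1 Mv2 :: "'s::finite \<Rightarrow> 'm::finite set"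
    and delta :: "'s \<Rightarrow> 'm \<Rightarrow> 'm \<Rightarrow> 's pmf"
    and T :: "'s set" and v :: "'s \<Rightarrow> real" and xi1 :: "'s \<Rightarrow> 'm pmf"
  assumes "game Mv1 Mv2 delta"
    and "\<forall>s \<in> T \<union> W2 Mv1 Mv2 delta T. absorbing Mv1 Mv2 delta s"
    and "\<forall>s. 0 \<le> v s \<and> v s \<le> 1"
    and "\<forall>s. v s \<le> Pre1 Mv1 Mv2 delta v s"
    and "\<forall>s \<in> W2 Mv1 Mv2 delta T. v s = 0"
    and "selector Mv1 xi1"
    and "Pre1_sel Mv2 delta xi1 v = Pre1 Mv1 Mv2 delta v"
    and "proper_selector Mv1 Mv2 delta T xi1"
  shows "\<forall>pi2. strategy Mv2 pi2 \<longrightarrow>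
           (\<forall>s. reach_prob delta T (memoryless xi1) pi2 s \<ge> v s)"
proof (intro allI impI)
  fix pi2 s assume pi2: "strategy Mv2 pi2"
  let ?U = "T \<union> W2 Mv1 Mv2 delta T"
  have "v (last h) \<le> measure_pmf.expectation (step delta (memoryless xi1) pi2 h) v"
    if "h \<noteq> []" for h
    using assms(4,7) Pre1_sel_le_expectation_step[OF assms(1) pi2 that, of xi1 v]
    by (metis order.trans)
  then have "v s \<le> reach_within delta T (memoryless xi1) pi2 n [s] + 1
                     - reach_within delta ?U (memoryless xi1) pi2 n [s]" for n
    using value_le_reach_within_defect[of T ?U v delta "memoryless xi1" pi2 "[s]"] assms(3,5) by auto
  moreover have "reach_prob delta ?U (memoryless xi1) pi2 s = 1"
    using assms(8) pi2 reach_prob_start_in[of s ?U]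
    by (cases "s \<in> ?U") (auto simp: proper_selector_def proper_strategy_def)
  ultimately show "v s \<le> reach_prob delta T (memoryless xi1) pi2 s"
    by (rule le_reach_prob_of_defect_bound)
qed

end
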